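(* Let $\vec{G}$ be a DDMOG of order $n$, let $g$ be a DDM labeling of $\vec{G}$, and let $u\in V(\vec{G})$ satisfy $g(u)=n$. Let $\vec{H}$ be a DDMOG of order $m$, let $h$ be a DDM labeling of $\vec{H}$, and let $w\in V(\vec{H})$ satisfy $h(w)=1$. If $\vec{H}$ is balanced, then the vertex coalescence $\vec{K}=\vec{G}\cdot_{uw}\vec{H}$ is a DDMOG on $n+m-1$ vertices.
   Context: An oriented graph is a finite digraph without loops such that whenever $(u,v)$ is an arc, $(v,u)$ is not. For a vertex $v$, $N^+(v)=\{x:(x,v)\text{ is an arc}\}$, $N^-(v)=\{x:(v,x)\text{ is an arc}\}$, $imb(v)=|N^+(v)|-|N^-(v)|$; the oriented graph is balanced if $imb(v)=0$ for all $v$. For a labeling $f$, $wt_f(v)=\sum_{x\in N^+(v)}f(x)-\sum_{x\in N^-(v)}f(x)$. A DDM labeling of an oriented graph on $n$ vertices is a bijection $f:V\to\{1,\dots,n\}$ with $wt_f(v)=0$ for all $v$; a DDMOG is an oriented graph admitting a DDM labeling. For a vertex $u$ of $\vec{G_1}$ and a vertex $v$ of $\vec{G_2}$ (vertex-disjoint oriented graphs), the vertex coalescence $\vec{G_1}\cdot_{uv}\vec{G_2}$ is obtained from the disjoint union $\vec{G_1}\cup\vec{G_2}$ by adding the arc $(u,x)$ for every arc $(v,x)$ of $\vec{G_2}$, adding the arc $(x,u)$ for every arc $(x,v)$ of $\vec{G_2}$, and then deleting $v$. *)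

theory Defs
  imports Main
begin

definition oriented_graph :: "'a set \<Rightarrow> ('a \<times> 'a) set \<Rightarrow> bool" where
  "oriented_graph V A \<longleftrightarrow> finite V \<and> A \<subseteq> V \<times> V \<and>
     (\<forall>x. (x, x) \<notin> A) \<and> (\<forall>u v. (u, v) \<in> A \<longrightarrow> (v, u) \<notin> A)"

text \<open>As in the paper: N+(v) = {x. (x,v) arc}, N-(v) = {x. (v,x) arc}.\<close>
definition in_nbrs :: "('a \<times> 'a) set \<Rightarrow> 'a \<Rightarrow> 'a set" where
  "in_nbrs A v = {x. (x, v) \<in> A}"

definition out_nbrs :: "('a \<times> 'a) set \<Rightarrow> 'a \<Rightarrow> 'a set" where
  "out_nbrs A v = {x. (v, x) \<in> A}"

definition imb :: "('a \<times> 'a) set \<Rightarrow> 'a \<Rightarrow> int" where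
  "imb A v = int (card (in_nbrs A v)) - int (card (out_nbrs A v))"

definition balanced :: "'a set \<Rightarrow> ('a \<times> 'a) set \<Rightarrow> bool" where
  "balanced V A \<longleftrightarrow> (\<forall>v\<in>V. imb A v = 0)"

definition wt :: "('a \<times> 'a) set \<Rightarrow> ('a \<Rightarrow> nat) \<Rightarrow> 'a \<Rightarrow> int" where
  "wt A f v = (\<Sum>x\<in>in_nbrs A v. int (f x)) - (\<Sum>x\<in>out_nbrs A v. int (f x))"

definition DDM_labeling :: "'a set \<Rightarrow> ('a \<times> 'a) set \<Rightarrow> ('a \<Rightarrow> nat) \<Rightarrow> bool" where
  "DDM_labeling V A f \<longleftrightarrow> bij_betw f V {1..card V} \<and> (\<forall>v\<in>V. wt A f v = 0)"

definition DDMOG :: "'a set \<Rightarrow> ('a \<times> 'a) set \<Rightarrow> bool" where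
  "DDMOG V A \<longleftrightarrow> oriented_graph V A \<and> (\<exists>f. DDM_labeling V A f)"

text \<open>Vertex coalescence G1 .uv G2 (vertex sets assumed disjoint): vertex v of G2 is
  identified with (replaced by) vertex u of G1.\<close>
definition coalesce_verts :: "'a set \<Rightarrow> 'a set \<Rightarrow> 'a \<Rightarrow> 'a set" where
  "coalesce_verts V1 V2 v = V1 \<union> (V2 - {v})"

definition coalesce_arcs ::
  "('a \<times> 'a) set \<Rightarrow> ('a \<times> 'a) set \<Rightarrow> 'a \<Rightarrow> 'a \<Rightarrow> ('a \<times> 'a) set" where
  "coalesce_arcs A1 A2 u v =
     A1 \<union> {(x, y). (x, y) \<in> A2 \<and> x \<noteq> v \<and> y \<noteq> v}
        \<union> {(u, x) | x. (v, x) \<in> A2} \<union> {(x, u) | x. (x, v) \<in> A2}"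

end

theory Submission
  imports Defs
begin

(* Renaming w to u turns H into a copy H' that meets G exactly in u, and K = G \<union> H'.
   Label G by g and H' by h + (n - 1); this is consistent at u since g u = n = h w + n - 1,
   and the labels of H' - {u} fill {n + 1..n + m - 1}.  Weights are additive over the
   arc-disjoint union.  G contributes nothing because g is a DDM labeling; at a vertex of H'
   the shift by n - 1 changes the weight by (n - 1) times the imbalance, which vanishes
   since H is balanced. *)

lemma in_nbrs_subset: "A \<subseteq> V \<times> V \<Longrightarrow> in_nbrs A v \<subseteq> V"
  unfolding in_nbrs_def by auto

lemma out_nbrs_subset: "A \<subseteq> V \<times> V \<Longrightarrow> out_nbrs A v \<subseteq> V"
  unfolding out_nbrs_def by auto

lemma finite_in_nbrs: "finite A \<Longrightarrow> finite (in_nbrs A v)"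
  unfolding in_nbrs_def by (rule finite_subset[of _ "fst ` A"]) force+

lemma finite_out_nbrs: "finite A \<Longrightarrow> finite (out_nbrs A v)"
  unfolding out_nbrs_def by (rule finite_subset[of _ "snd ` A"]) force+

lemma oriented_graph_finite_arcs: "oriented_graph V A \<Longrightarrow> finite A"
  unfolding oriented_graph_def by (meson finite_SigmaI finite_subset)

lemma map_prod_image_mem_iff:
  assumes "inj_on \<phi> V" and "A \<subseteq> V \<times> V" and "a \<in> V" and "b \<in> V"
  shows "(\<phi> a, \<phi> b) \<in> map_prod \<phi> \<phi> ` A \<longleftrightarrow> (a, b) \<in> A"
proof
  assume "(\<phi> a, \<phi> b) \<in> map_prod \<phi> \<phi> ` A"
  then obtain x y where "(x, y) \<in> A" "\<phi> a = \<phi> x" "\<phi> b = \<phi> y" by auto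
  moreover from this have "x \<in> V" "y \<in> V" using assms(2) by auto
  ultimately show "(a, b) \<in> A" using assms inj_onD by metis
qed auto

lemma oriented_graph_map_prod_image:
  assumes "oriented_graph V A" and "inj_on \<phi> V"
  shows "oriented_graph (\<phi> ` V) (map_prod \<phi> \<phi> ` A)"
  unfolding oriented_graph_def
proof (intro conjI allI impI)
  have A: "A \<subseteq> V \<times> V" and "finite V" using assms(1) unfolding oriented_graph_def by blast+
  then show "finite (\<phi> ` V)" and "map_prod \<phi> \<phi> ` A \<subseteq> \<phi> ` V \<times> \<phi> ` V" by auto
  show "(x, x) \<notin> map_prod \<phi> \<phi> ` A" for x
  proof
    assume "(x, x) \<in> map_prod \<phi> \<phi> ` A"
    then obtain a b where "(a, b) \<in> A" "\<phi> a = x" "\<phi> b = x" by auto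
    moreover from this have "a = b" using A assms(2) inj_onD by fastforce
    ultimately show False using assms(1) unfolding oriented_graph_def by blast
  qed
  show "(y, x) \<notin> map_prod \<phi> \<phi> ` A" if xy: "(x, y) \<in> map_prod \<phi> \<phi> ` A" for x y
  proof -
    obtain a b where "(a, b) \<in> A" "x = \<phi> a" "y = \<phi> b" using xy by auto
    moreover from this have "(b, a) \<notin> A" and "a \<in> V" and "b \<in> V"
      using assms(1) A unfolding oriented_graph_def by blast+
    ultimately show ?thesis using map_prod_image_mem_iff[OF assms(2) A] by metis
  qed
qed

lemma oriented_graph_arcs_disjoint:
  assumes "oriented_graph V1 A1" and "oriented_graph V2 A2" and "V1 \<inter> V2 \<subseteq> {c}"
  shows "A1 \<inter> A2 = {}"
proof (intro equals0I)
  fix p assume p: "p \<in> A1 \<inter> A2"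
  obtain x y where xy: "p = (x, y)" by (cases p)
  have "A1 \<subseteq> V1 \<times> V1" and "A2 \<subseteq> V2 \<times> V2"
    using assms(1,2) unfolding oriented_graph_def by blast+
  with p xy have "x \<in> V1 \<inter> V2" and "y \<in> V1 \<inter> V2" by auto
  with assms(3) have "x = y" by blast
  with p xy assms(1) show False unfolding oriented_graph_def by auto
qed

lemma oriented_graph_Un:
  assumes "oriented_graph V1 A1" and "oriented_graph V2 A2" and "V1 \<inter> V2 \<subseteq> {c}"
  shows "oriented_graph (V1 \<union> V2) (A1 \<union> A2)"
proof -
  have A1: "A1 \<subseteq> V1 \<times> V1" and A2: "A2 \<subseteq> V2 \<times> V2"
    using assms(1,2) unfolding oriented_graph_def by blast+
  have "(y, x) \<notin> A2" if "(x, y) \<in> A1" for x y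
  proof
    assume "(y, x) \<in> A2"
    with that A1 A2 have "x \<in> V1 \<inter> V2" and "y \<in> V1 \<inter> V2" by auto
    with assms(3) have "x = y" by blast
    with that assms(1) show False unfolding oriented_graph_def by auto
  qed
  then show ?thesis using assms(1,2) unfolding oriented_graph_def by auto
qed

lemma wt_cong:
  assumes "A \<subseteq> V \<times> V" and "\<And>x. x \<in> V \<Longrightarrow> f x = f' x"
  shows "wt A f v = wt A f' v"
proof -
  have "f x = f' x" if "x \<in> in_nbrs A v \<union> out_nbrs A v" for x
    using that assms in_nbrs_subset[OF assms(1)] out_nbrs_subset[OF assms(1)] by blast
  then show ?thesis unfolding wt_def by (simp cong: sum.cong)
qed

lemma wt_outside:
  assumes "A \<subseteq> V \<times> V" and "v \<notin> V"
  shows "wt A f v = 0"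
proof -
  have "in_nbrs A v = {}" and "out_nbrs A v = {}"
    using assms unfolding in_nbrs_def out_nbrs_def by auto
  then show ?thesis unfolding wt_def by simp
qed

lemma wt_Un:
  assumes "finite A" and "finite B" and "A \<inter> B = {}"
  shows "wt (A \<union> B) f v = wt A f v + wt B f v"
proof -
  have "in_nbrs (A \<union> B) v = in_nbrs A v \<union> in_nbrs B v"
    and "out_nbrs (A \<union> B) v = out_nbrs A v \<union> out_nbrs B v"
    unfolding in_nbrs_def out_nbrs_def by auto
  moreover have "in_nbrs A v \<inter> in_nbrs B v = {}" and "out_nbrs A v \<inter> out_nbrs B v = {}"
    using assms(3) unfolding in_nbrs_def out_nbrs_def by auto
  ultimately show ?thesis
    using assms unfolding wt_def
    by (simp add: sum.union_disjoint finite_in_nbrs finite_out_nbrs)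
qed

lemma wt_add_const:
  assumes "finite A"
  shows "wt A (\<lambda>x. f x + c) v = wt A f v + int c * imb A v"
  using assms unfolding wt_def imb_def
  by (simp add: sum.distrib finite_in_nbrs finite_out_nbrs algebra_simps)

lemma in_nbrs_map_prod_image:
  assumes "inj_on \<phi> V" and "A \<subseteq> V \<times> V" and "v \<in> V"
  shows "in_nbrs (map_prod \<phi> \<phi> ` A) (\<phi> v) = \<phi> ` in_nbrs A v"
proof (intro set_eqI iffI)
  fix x
  assume x: "x \<in> in_nbrs (map_prod \<phi> \<phi> ` A) (\<phi> v)"
  then obtain a where "a \<in> V" and "x = \<phi> a"
    using assms(2) unfolding in_nbrs_def by auto
  moreover from this x have "(a, v) \<in> A"
    using map_prod_image_mem_iff[OF assms(1,2) _ assms(3)] unfolding in_nbrs_def by simp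
  ultimately show "x \<in> \<phi> ` in_nbrs A v" unfolding in_nbrs_def by simp
qed (auto simp: in_nbrs_def)

lemma out_nbrs_map_prod_image:
  assumes "inj_on \<phi> V" and "A \<subseteq> V \<times> V" and "v \<in> V"
  shows "out_nbrs (map_prod \<phi> \<phi> ` A) (\<phi> v) = \<phi> ` out_nbrs A v"
proof (intro set_eqI iffI)
  fix x
  assume x: "x \<in> out_nbrs (map_prod \<phi> \<phi> ` A) (\<phi> v)"
  then obtain a where "a \<in> V" and "x = \<phi> a"
    using assms(2) unfolding out_nbrs_def by auto
  moreover from this x have "(v, a) \<in> A"
    using map_prod_image_mem_iff[OF assms] unfolding out_nbrs_def by simp
  ultimately show "x \<in> \<phi> ` out_nbrs A v" unfolding out_nbrs_def by simp
qed (auto simp: out_nbrs_def)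

lemma wt_map_prod_image:
  assumes "inj_on \<phi> V" and "A \<subseteq> V \<times> V" and "v \<in> V"
  shows "wt (map_prod \<phi> \<phi> ` A) f (\<phi> v) = wt A (f \<circ> \<phi>) v"
proof -
  have "inj_on \<phi> (in_nbrs A v)" and "inj_on \<phi> (out_nbrs A v)"
    using inj_on_subset[OF assms(1) in_nbrs_subset[OF assms(2)]]
      inj_on_subset[OF assms(1) out_nbrs_subset[OF assms(2)]] .
  then show ?thesis
    using assms unfolding wt_def
    by (simp add: in_nbrs_map_prod_image out_nbrs_map_prod_image sum.reindex)
qed

lemma DDM_labeling_wt_eq_0:
  assumes "DDM_labeling V A f" and "A \<subseteq> V \<times> V"
  shows "wt A f v = 0"
  using assms wt_outside unfolding DDM_labeling_def by metis

lemma balanced_DDM_labeling_shift_wt_eq_0: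
  assumes "DDM_labeling V A f" and "balanced V A" and "oriented_graph V A"
  shows "wt A (\<lambda>x. f x + c) v = 0"
proof -
  have A: "A \<subseteq> V \<times> V" using assms(3) unfolding oriented_graph_def by blast
  show ?thesis
  proof (cases "v \<in> V")
    case True
    then have "imb A v = 0" using assms(2) unfolding balanced_def by blast
    then show ?thesis
      using assms(1,3) A by (simp add: wt_add_const oriented_graph_finite_arcs DDM_labeling_wt_eq_0)
  next
    case False
    then show ?thesis using A wt_outside by metis
  qed
qed

lemma wt_map_prod_image_eq_0:
  assumes "inj_on \<phi> V" and "A \<subseteq> V \<times> V" and "\<And>v. wt A (f \<circ> \<phi>) v = 0"
  shows "wt (map_prod \<phi> \<phi> ` A) f v = 0"
proof (cases "v \<in> \<phi> ` V")
  case True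
  then show ?thesis using assms wt_map_prod_image by fastforce
next
  case False
  have "map_prod \<phi> \<phi> ` A \<subseteq> \<phi> ` V \<times> \<phi> ` V" using assms(2) by auto
  then show ?thesis using False wt_outside by metis
qed

lemma bij_betw_glued_labeling:
  fixes g h :: "'a \<Rightarrow> nat"
  assumes "bij_betw g V1 {1..n}" and "bij_betw h V2 {1..m}" and "V1 \<inter> V2 = {}"
    and "w \<in> V2" and "h w = 1" and "0 < n"
  shows "bij_betw (\<lambda>x. if x \<in> V1 then g x else h x + (n - 1))
           (V1 \<union> (V2 - {w})) {1..n + m - 1}"
proof -
  obtain c where n: "n = Suc c" using assms(6) by (cases n) auto
  have "bij_betw h (V2 - {w}) ({1..m} - {1})"
    using assms by (intro bij_betw_DiffI) (auto simp: bij_betw_def)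
  moreover have "{1..m} - {1} = {2..m}" by auto
  moreover have "bij_betw (\<lambda>k. k + c) {2..m} {2 + c..m + c}"
    by (simp add: bij_betw_def inj_on_def)
  ultimately have "bij_betw ((\<lambda>k. k + c) \<circ> h) (V2 - {w}) {2 + c..m + c}"
    by (auto intro: bij_betw_trans)
  then have H: "bij_betw (\<lambda>x. if x \<in> V1 then g x else h x + (n - 1)) (V2 - {w}) {2 + c..m + c}"
    using assms(3) n by (subst bij_betw_cong[where g = "(\<lambda>k. k + c) \<circ> h"]) auto
  have G: "bij_betw (\<lambda>x. if x \<in> V1 then g x else h x + (n - 1)) V1 {1..n}"
    using assms(1) by (subst bij_betw_cong[where g = g]) auto
  have "{1..n} \<inter> {2 + c..m + c} = {}" using n by auto
  moreover have "m \<ge> 1" using assms(2,4) bij_betwE by fastforce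
  then have "{1..n} \<union> {2 + c..m + c} = {1..n + m - 1}" using n by auto
  ultimately show ?thesis using bij_betw_combine[OF G H] by metis
qed

lemma coalesce_verts_eq_image:
  assumes "u \<in> V1" and "v \<in> V2"
  shows "coalesce_verts V1 V2 v = V1 \<union> id(v := u) ` V2"
  using assms unfolding coalesce_verts_def by auto

(* A loop at v would survive as (u, v) in the coalescence but become (u, u) under the renaming. *)
lemma coalesce_arcs_eq_image:
  assumes "(v, v) \<notin> A2"
  shows "coalesce_arcs A1 A2 u v = A1 \<union> map_prod (id(v := u)) (id(v := u)) ` A2"
proof -
  let ?\<phi> = "id(v := u)"
  have "map_prod ?\<phi> ?\<phi> ` A2 = {(x, y). (x, y) \<in> A2 \<and> x \<noteq> v \<and> y \<noteq> v}
      \<union> {(u, x) | x. (v, x) \<in> A2} \<union> {(x, u) | x. (x, v) \<in> A2}"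
    (is "_ = ?R")
  proof (intro equalityI subsetI)
    fix p assume "p \<in> map_prod ?\<phi> ?\<phi> ` A2"
    then obtain x y where "(x, y) \<in> A2" and "p = (?\<phi> x, ?\<phi> y)" by auto
    with assms show "p \<in> ?R"
      by (cases "x = v"; cases "y = v") simp_all
  next
    fix p assume "p \<in> ?R"
    then consider x y where "p = (x, y)" "(x, y) \<in> A2" "x \<noteq> v" "y \<noteq> v"
      | x where "p = (u, x)" "(v, x) \<in> A2" | x where "p = (x, u)" "(x, v) \<in> A2"
      by blast
    then show "p \<in> map_prod ?\<phi> ?\<phi> ` A2"
    proof cases
      case (1 x y) then show ?thesis by (intro image_eqI[of _ _ "(x, y)"]) auto
    next
      case (2 x) with assms show ?thesis by (intro image_eqI[of _ _ "(v, x)"]) auto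
    next
      case (3 x) with assms show ?thesis by (intro image_eqI[of _ _ "(x, v)"]) auto
    qed
  qed
  then show ?thesis unfolding coalesce_arcs_def by (simp add: Un_assoc)
qed

theorem theorem2:
  fixes VG VH :: "'a set" and AG AH :: "('a \<times> 'a) set"
    and g h :: "'a \<Rightarrow> nat" and u w :: 'a and n m :: nat
  assumes disj: "VG \<inter> VH = {}"
    and G: "DDMOG VG AG" and nG: "card VG = n"
    and g: "DDM_labeling VG AG g" and u: "u \<in> VG" and gu: "g u = n"
    and H: "DDMOG VH AH" and mH: "card VH = m"
    and h: "DDM_labeling VH AH h" and w: "w \<in> VH" and hw: "h w = 1"
    and bal: "balanced VH AH"
  shows "DDMOG (coalesce_verts VG VH w) (coalesce_arcs AG AH u w)
       \<and> card (coalesce_verts VG VH w) = n + m - 1"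
proof -
  define \<phi> where "\<phi> = id(w := u)"
  define F where "F = (\<lambda>x. if x \<in> VG then g x else h x + (n - 1))"
  have oG: "oriented_graph VG AG" and oH: "oriented_graph VH AH"
    using G H unfolding DDMOG_def by blast+
  then have AG: "AG \<subseteq> VG \<times> VG" and AH: "AH \<subseteq> VH \<times> VH" and "(w, w) \<notin> AH"
    unfolding oriented_graph_def by blast+
  have inj: "inj_on \<phi> VH"
    unfolding \<phi>_def using disj u by (intro inj_on_fun_updI) auto
  have oH': "oriented_graph (\<phi> ` VH) (map_prod \<phi> \<phi> ` AH)"
    using oH inj by (rule oriented_graph_map_prod_image)
  have meet: "VG \<inter> \<phi> ` VH \<subseteq> {u}"
    unfolding \<phi>_def using disj by auto
  have KV: "coalesce_verts VG VH w = VG \<union> \<phi> ` VH"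
    unfolding \<phi>_def using u w by (rule coalesce_verts_eq_image)
  have KA: "coalesce_arcs AG AH u w = AG \<union> map_prod \<phi> \<phi> ` AH"
    unfolding \<phi>_def using \<open>(w, w) \<notin> AH\<close> by (rule coalesce_arcs_eq_image)
  have "finite VG" using oG unfolding oriented_graph_def by blast
  with u nG have "0 < n" by (auto simp: card_gt_0_iff)
  then have bij: "bij_betw F (coalesce_verts VG VH w) {1..n + m - 1}"
    using g h nG mH disj w hw unfolding F_def coalesce_verts_def DDM_labeling_def
    by (intro bij_betw_glued_labeling) auto
  have "wt AG F v = 0" for v
    using wt_cong[OF AG, of F g] DDM_labeling_wt_eq_0[OF g AG] unfolding F_def by simp
  moreover have "wt (map_prod \<phi> \<phi> ` AH) F v = 0" for v
  proof (rule wt_map_prod_image_eq_0[OF inj AH])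
    fix y
    have "wt AH (F \<circ> \<phi>) y = wt AH (\<lambda>x. h x + (n - 1)) y"
      using disj u gu hw \<open>0 < n\<close> by (intro wt_cong[OF AH]) (auto simp: F_def \<phi>_def)
    also have "\<dots> = 0" using h bal oH by (rule balanced_DDM_labeling_shift_wt_eq_0)
    finally show "wt AH (F \<circ> \<phi>) y = 0" .
  qed
  moreover have "AG \<inter> map_prod \<phi> \<phi> ` AH = {}"
    using oG oH' meet by (rule oriented_graph_arcs_disjoint)
  ultimately have "wt (coalesce_arcs AG AH u w) F v = 0" for v
    unfolding KA using oG oH' by (simp add: wt_Un oriented_graph_finite_arcs)
  moreover have "oriented_graph (coalesce_verts VG VH w) (coalesce_arcs AG AH u w)"
    unfolding KV KA using oG oH' meet by (rule oriented_graph_Un)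
  moreover have "card (coalesce_verts VG VH w) = n + m - 1"
    using bij_betw_same_card[OF bij] by simp
  ultimately show ?thesis
    using bij unfolding DDMOG_def DDM_labeling_def by auto
qed

end
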